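(* Let $\Lambda$ be the eigenspectrum of a $2S\times2S$ quantum CM which satisfies the unique pairing condition but not the $(S-1)$-pure unique pairing condition. Write the unique perfect matching of $G(\Lambda)$ as pairs $(\nu_i e^{-2r_i},\nu_i e^{2r_i})$, $i=1,\dots,S$, with $r_i\ge 0$, $\nu_i\ge1$, $\nu_1\ge\dots\ge\nu_S$, and let $\zeta$ be the number of indices with $\nu_i>1$ (so $\nu_i>1$ for $i\le\zeta$ and $\nu_i=1$ for $i>\zeta$; $\zeta\ge2$). Assume that in the $2\zeta$-tuple $(\nu_1e^{-2r_1},\nu_1e^{2r_1},\dots,\nu_\zeta e^{-2r_\zeta},\nu_\zeta e^{2r_\zeta})$ there are at least two entries each of which is different from all other entries of the tuple. Then (1) the set of symplectic eigenvalues and squeezing parameters of quantum CMs with eigenspectrum $\Lambda$ is not unique (there exist quantum CMs with eigenspectrum $\Lambda$ having different multisets of symplectic eigenvalues), and (2) there exist two quantum CMs with eigenspectrum $\Lambda$ related by an orthogonal transformation but not by any element of $\mathrm{SpO}(2S,\mathbb{R})$.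
   Context: Fix an integer $S\ge 1$. Coordinates of $\mathbb{R}^{2S}$ are ordered as $(q_1,p_1,\dots,q_S,p_S)$; coordinates $2i-1$ and $2i$ form the $i$-th mode. Let $\Omega=\bigoplus_{i=1}^S\begin{pmatrix}0&1\\-1&0\end{pmatrix}$. A real matrix $A$ is symplectic if $A^T\Omega A=\Omega$. $\mathrm{SpO}(2S,\mathbb{R})$ denotes the group of real $2S\times2S$ matrices that are both orthogonal and symplectic. A quantum CM is a real symmetric positive-definite $2S\times 2S$ matrix $\Gamma$ such that $\Gamma+i\Omega$ is positive semidefinite. By Williamson's theorem any real positive-definite $\Gamma$ can be written $\Gamma=A\,\mathrm{diag}(\nu_1,\nu_1,\dots,\nu_S,\nu_S)\,A^T$ with $A$ symplectic; the multiset $\{\nu_i\}$ (the symplectic eigenvalues) is uniquely determined by $\Gamma$. Let $\Lambda=(\lambda_i)_{i=1}^{2S}$ be the eigenvalues of a quantum CM in non-ascending order. Let $G(\Lambda)$ be the graph with vertex set $\{1,\dots,2S\}$ and edge set $\{\{i,j\}: i<j,\ \lambda_i\lambda_j\ge 1\}$; an edge $\{i,j\}$ is pure if $\lambda_i\lambda_j=1$. $\Lambda$ satisfies the unique pairing condition if $G(\Lambda)$ has a unique perfect matching up to permutations of vertices carrying equal eigenvalues. $\Lambda$ satisfies the $t$-pure unique pairing condition if it satisfies the unique pairing condition and at least $t$ of the $S$ edges of this perfect matching are pure. *)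

theory Defs
  imports "Jordan_Normal_Form.Char_Poly" "HOL-Library.Multiset" "HOL-Combinatorics.Permutations"
begin

(* Matrices are Jordan_Normal_Form matrices; indices are 0-based.
   Coordinates (q_1,p_1,...,q_S,p_S) become indices 0,1,...,2S-2,2S-1;
   mode i (0-based) consists of indices 2i and 2i+1. *)

definition Omega :: "nat \<Rightarrow> real mat" where
  "Omega S = mat (2*S) (2*S) (\<lambda>(i,j).
      if even i \<and> j = i + 1 then 1 else if odd i \<and> i = j + 1 then -1 else 0)"

definition symplectic :: "nat \<Rightarrow> real mat \<Rightarrow> bool" where
  "symplectic S A \<longleftrightarrow> A \<in> carrier_mat (2*S) (2*S) \<and> transpose_mat A * Omega S * A = Omega S"

definition orthogonal_real :: "nat \<Rightarrow> real mat \<Rightarrow> bool" where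
  "orthogonal_real n A \<longleftrightarrow> A \<in> carrier_mat n n \<and> transpose_mat A * A = 1\<^sub>m n"

definition SpO :: "nat \<Rightarrow> real mat set" where
  "SpO S = {A. orthogonal_real (2*S) A \<and> symplectic S A}"

definition pos_def_real :: "nat \<Rightarrow> real mat \<Rightarrow> bool" where
  "pos_def_real n G \<longleftrightarrow> G \<in> carrier_mat n n \<and>
     (\<forall>v \<in> carrier_vec n. v \<noteq> 0\<^sub>v n \<longrightarrow> v \<bullet> (G *\<^sub>v v) > 0)"

definition psd_complex :: "nat \<Rightarrow> complex mat \<Rightarrow> bool" where
  "psd_complex n M \<longleftrightarrow> M \<in> carrier_mat n n \<and>
     (\<forall>v \<in> carrier_vec n. Im (conjugate v \<bullet> (M *\<^sub>v v)) = 0 \<and>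
                              Re (conjugate v \<bullet> (M *\<^sub>v v)) \<ge> 0)"

definition quantum_CM :: "nat \<Rightarrow> real mat \<Rightarrow> bool" where
  "quantum_CM S G \<longleftrightarrow> G \<in> carrier_mat (2*S) (2*S) \<and> transpose_mat G = G \<and>
     pos_def_real (2*S) G \<and>
     psd_complex (2*S) (map_mat complex_of_real G + \<i> \<cdot>\<^sub>m map_mat complex_of_real (Omega S))"

definition eigenspectrum :: "real mat \<Rightarrow> real list \<Rightarrow> bool" where
  "eigenspectrum G Lam \<longleftrightarrow> sorted_wrt (\<ge>) Lam \<and> length Lam = dim_row G \<and>
     char_poly G = (\<Prod>a \<leftarrow> Lam. [:- a, 1:])"

definition williamson_diag :: "nat \<Rightarrow> real list \<Rightarrow> real mat" where
  "williamson_diag S nu = mat (2*S) (2*S) (\<lambda>(i,j). if i = j then nu ! (i div 2) else 0)"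

definition symplectic_eigenvalues :: "nat \<Rightarrow> real mat \<Rightarrow> real list \<Rightarrow> bool" where
  "symplectic_eigenvalues S G nu \<longleftrightarrow> length nu = S \<and>
     (\<exists>A. symplectic S A \<and> G = A * williamson_diag S nu * transpose_mat A)"

definition edge_G :: "real list \<Rightarrow> nat \<Rightarrow> nat \<Rightarrow> bool" where
  "edge_G Lam i j \<longleftrightarrow> i < j \<and> j < length Lam \<and> Lam ! i * Lam ! j \<ge> 1"

definition pure_edge :: "real list \<Rightarrow> nat set \<Rightarrow> bool" where
  "pure_edge Lam e \<longleftrightarrow> (\<exists>i j. e = {i, j} \<and> i < j \<and> Lam ! i * Lam ! j = 1)"

definition perfect_matching :: "real list \<Rightarrow> nat set set \<Rightarrow> bool" where
  "perfect_matching Lam M \<longleftrightarrow>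
     (\<forall>e \<in> M. \<exists>i j. e = {i, j} \<and> edge_G Lam i j) \<and>
     (\<forall>v < length Lam. \<exists>!e. e \<in> M \<and> v \<in> e)"

definition matching_equiv :: "real list \<Rightarrow> nat set set \<Rightarrow> nat set set \<Rightarrow> bool" where
  "matching_equiv Lam M M' \<longleftrightarrow>
     (\<exists>\<sigma>. \<sigma> permutes {0..<length Lam} \<and> (\<forall>i < length Lam. Lam ! (\<sigma> i) = Lam ! i) \<and>
          M' = (\<lambda>e. \<sigma> ` e) ` M)"

definition unique_pairing :: "real list \<Rightarrow> bool" where
  "unique_pairing Lam \<longleftrightarrow> (\<exists>M. perfect_matching Lam M \<and>
      (\<forall>M'. perfect_matching Lam M' \<longrightarrow> matching_equiv Lam M M'))"

definition t_pure_unique_pairing :: "nat \<Rightarrow> real list \<Rightarrow> bool" where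
  "t_pure_unique_pairing t Lam \<longleftrightarrow> unique_pairing Lam \<and>
     (\<exists>M. perfect_matching Lam M \<and> card {e \<in> M. pure_edge Lam e} \<ge> t)"

end

theory Submission
  imports Defs
begin

text \<open>
  List the eigenvalues mode by mode as
  \<open>d = (\<nu>\<^sub>1 exp(-2r\<^sub>1), \<nu>\<^sub>1 exp(2r\<^sub>1), \<dots>, \<nu>\<^sub>S exp(-2r\<^sub>S), \<nu>\<^sub>S exp(2r\<^sub>S))\<close>.
  Since the product \<open>\<nu>\<^sub>i\<^sup>2\<close> of the two entries of each mode is at least 1, \<open>diag(d)\<close> is a quantum CM with spectrum \<open>\<Lambda>\<close>; so is
  \<open>R diag(d) R\<^sup>T\<close> for a rotation \<open>R\<close> by a small angle in the plane of two coordinates \<open>u\<close>, \<open>v\<close>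
  of different squeezed modes (\<open>\<nu> > 1\<close>), because \<open>G + i\<Omega>\<close> stays positive: the only new coupling
  is between \<open>u\<close> and \<open>v\<close>, and the Schur complements \<open>d\<^sub>u - 1/d\<^sub>u\<^sub>'\<close>, \<open>d\<^sub>v - 1/d\<^sub>v\<^sub>'\<close>
  (primes denoting the partner coordinates) are strictly positive.

  The function \<open>G \<mapsto> tr(\<Omega>G\<Omega>G)\<close> is invariant under symplectic congruence and equals
  \<open>-2 \<Sum> \<nu>\<^sub>i\<^sup>2\<close> on a Williamson normal form. The rotation changes it by
  \<open>2 sin\<^sup>2\<theta> (d\<^sub>u - d\<^sub>v)(d\<^sub>u\<^sub>' - d\<^sub>v\<^sub>')\<close>, which is nonzero once \<open>u\<close> and \<open>v\<close> are chosen
  using the two entries of the tuple that occur only once. Failure of the \<open>(S-1)\<close>-pure pairing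
  condition provides the two squeezed modes needed for this choice.
\<close>

definition partner :: "nat \<Rightarrow> nat" where
  "partner i = (if even i then Suc i else i - 1)"

definition mode_sign :: "nat \<Rightarrow> real" where
  "mode_sign i = (if even i then 1 else -1)"

lemma partner_less: "i < 2 * S \<Longrightarrow> partner i < 2 * S"
  unfolding partner_def by presburger

lemma partner_partner [simp]: "partner (partner i) = i"
  unfolding partner_def by presburger

lemma partner_div [simp]: "partner i div 2 = i div 2"
  unfolding partner_def by presburger

lemma partner_neq: "partner i \<noteq> i"
  unfolding partner_def by presburger

lemma partner_eq_iff: "partner i = j \<longleftrightarrow> i = partner j"
  by (metis partner_partner)

lemma mode_sign_partner: "mode_sign (partner i) = - mode_sign i"
  unfolding partner_def mode_sign_def by auto

lemma mode_cases:
  obtains "i = 2 * (i div 2)" "partner i = Suc (2 * (i div 2))"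
  | "i = Suc (2 * (i div 2))" "partner i = 2 * (i div 2)"
  using that unfolding partner_def by (cases "even i") (auto elim!: evenE oddE)

lemma mode_product_eq:
  fixes f :: "nat \<Rightarrow> 'a::ab_semigroup_mult"
  shows "f (2 * (i div 2)) * f (Suc (2 * (i div 2))) = f i * f (partner i)"
  by (cases rule: mode_cases[of i]) (simp_all add: mult.commute)

lemma partner_notin_other_mode:
  assumes "u div 2 \<noteq> v div 2"
  shows "partner u \<noteq> u" "partner u \<noteq> v" "partner v \<noteq> u" "partner v \<noteq> v"
  using assms partner_neq partner_div by metis+

lemma sum_modes: "(\<Sum>i<2 * S. h i) = (\<Sum>k<S. h (2 * k) + h (Suc (2 * k)))"
  for h :: "nat \<Rightarrow> 'a::comm_monoid_add"
  by (induction S) (simp_all add: ac_simps)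

lemma Omega_carrier [simp]: "Omega S \<in> carrier_mat (2 * S) (2 * S)"
  unfolding Omega_def by simp

lemma Omega_dim [simp]: "dim_row (Omega S) = 2 * S" "dim_col (Omega S) = 2 * S"
  unfolding Omega_def by auto

lemma mult_carrier_mat_sq:
  "A \<in> carrier_mat n n \<Longrightarrow> B \<in> carrier_mat n n \<Longrightarrow> A * B \<in> carrier_mat n n"
  by auto

lemma Omega_index:
  "i < 2 * S \<Longrightarrow> j < 2 * S \<Longrightarrow> Omega S $$ (i, j) = (if j = partner i then mode_sign i else 0)"
  unfolding Omega_def partner_def mode_sign_def by auto presburger+

lemma Omega_mult_index:
  assumes "G \<in> carrier_mat (2 * S) nc" "i < 2 * S" "k < nc"
  shows "(Omega S * G) $$ (i, k) = mode_sign i * G $$ (partner i, k)"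
proof -
  have "(Omega S * G) $$ (i, k) = (\<Sum>l<2 * S. Omega S $$ (i, l) * G $$ (l, k))"
    using assms by (simp add: scalar_prod_def atLeast0LessThan)
  also have "\<dots> = (\<Sum>l<2 * S. if l = partner i then mode_sign i * G $$ (l, k) else 0)"
    using assms by (intro sum.cong) (auto simp: Omega_index)
  finally show ?thesis
    using partner_less[OF assms(2)] by simp
qed

section \<open>A symplectic invariant\<close>

definition mat_trace :: "'a::comm_monoid_add mat \<Rightarrow> 'a" where
  "mat_trace A = (\<Sum>i<dim_row A. A $$ (i, i))"

lemma mat_trace_comm:
  fixes A B :: "'a::comm_semiring_0 mat"
  assumes "A \<in> carrier_mat n m" "B \<in> carrier_mat m n"
  shows "mat_trace (A * B) = mat_trace (B * A)"
proof -
  have "mat_trace (A * B) = (\<Sum>i<n. \<Sum>k<m. A $$ (i, k) * B $$ (k, i))"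
    using assms unfolding mat_trace_def by (simp add: scalar_prod_def atLeast0LessThan)
  also have "\<dots> = (\<Sum>k<m. \<Sum>i<n. B $$ (k, i) * A $$ (i, k))"
    by (subst sum.swap) (simp add: mult.commute)
  also have "\<dots> = mat_trace (B * A)"
    using assms unfolding mat_trace_def by (simp add: scalar_prod_def atLeast0LessThan)
  finally show ?thesis .
qed

definition omega_trace :: "nat \<Rightarrow> real mat \<Rightarrow> real" where
  "omega_trace S G = mat_trace (Omega S * G * Omega S * G)"

lemma omega_trace_symplectic_congruence:
  assumes A: "symplectic S A" and G: "G \<in> carrier_mat (2 * S) (2 * S)"
  shows "omega_trace S (A * G * transpose_mat A) = omega_trace S G"
proof -
  let ?O = "Omega S" and ?n = "2 * S"
  have Ac: "A \<in> carrier_mat ?n ?n" and AO: "transpose_mat A * ?O * A = ?O"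
    using A unfolding symplectic_def by auto
  have At: "transpose_mat A \<in> carrier_mat ?n ?n" using Ac by simp
  let ?Z = "?O * A * G * transpose_mat A * ?O * A * G"
  have Zc: "?Z \<in> carrier_mat ?n ?n" using Ac At G by (meson mult_carrier_mat Omega_carrier)
  have "?O * (A * G * transpose_mat A) * ?O * (A * G * transpose_mat A) = ?Z * transpose_mat A"
    using Ac At G by (simp add: mult_carrier_mat_sq assoc_mult_mat[of _ ?n ?n _ ?n _ ?n])
  then have "omega_trace S (A * G * transpose_mat A) = mat_trace (transpose_mat A * ?Z)"
    unfolding omega_trace_def using mat_trace_comm[OF Zc At] by simp
  also have "transpose_mat A * ?Z = (transpose_mat A * ?O * A) * G * (transpose_mat A * ?O * A) * G"
    using Ac At G by (simp add: mult_carrier_mat_sq assoc_mult_mat[of _ ?n ?n _ ?n _ ?n])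
  finally show ?thesis unfolding AO omega_trace_def .
qed

lemma omega_trace_eq_mode_products:
  assumes G: "G \<in> carrier_mat (2 * S) (2 * S)"
    and no_pairing: "\<And>i j. i < 2 * S \<Longrightarrow> j < 2 * S \<Longrightarrow> i \<noteq> j \<Longrightarrow>
      G $$ (i, j) * G $$ (partner j, partner i) = 0"
  shows "omega_trace S G = - 2 * (\<Sum>k<S. G $$ (2 * k, 2 * k) * G $$ (Suc (2 * k), Suc (2 * k)))"
proof -
  let ?n = "2 * S"
  have OG: "Omega S * G * Omega S * G = (Omega S * G) * (Omega S * G)"
    using G by (simp add: mult_carrier_mat_sq assoc_mult_mat[of _ ?n ?n _ ?n _ ?n])
  have "omega_trace S G = (\<Sum>i<?n. \<Sum>k<?n. (Omega S * G) $$ (i, k) * (Omega S * G) $$ (k, i))"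
    unfolding omega_trace_def OG mat_trace_def using G by (simp add: scalar_prod_def atLeast0LessThan)
  also have "\<dots> = (\<Sum>i<?n. \<Sum>k<?n. if k = partner i then - (G $$ (i, i) * G $$ (partner i, partner i)) else 0)"
  proof (intro sum.cong refl)
    fix i k assume "i \<in> {..<?n}" "k \<in> {..<?n}"
    then have ik: "i < ?n" "k < ?n" "partner i < ?n" "partner k < ?n" using partner_less by auto
    have "(Omega S * G) $$ (i, k) * (Omega S * G) $$ (k, i)
        = (mode_sign i * mode_sign k) * (G $$ (partner i, k) * G $$ (partner k, i))"
      using G ik by (simp add: Omega_mult_index del: index_mult_mat(1))
    moreover have "mode_sign i * mode_sign (partner i) = -1"
      unfolding mode_sign_partner by (simp add: mode_sign_def)
    moreover have "G $$ (partner i, k) * G $$ (partner k, i) = 0" if "k \<noteq> partner i"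
      using no_pairing[of "partner i" k] ik that by simp
    ultimately show "(Omega S * G) $$ (i, k) * (Omega S * G) $$ (k, i) =
        (if k = partner i then - (G $$ (i, i) * G $$ (partner i, partner i)) else 0)"
      by (cases "k = partner i") simp_all
  qed
  also have "\<dots> = (\<Sum>i<?n. - (G $$ (i, i) * G $$ (partner i, partner i)))"
    using partner_less by (intro sum.cong refl) simp
  also have "\<dots> = - 2 * (\<Sum>k<S. G $$ (2 * k, 2 * k) * G $$ (Suc (2 * k), Suc (2 * k)))"
    unfolding sum_modes by (simp add: partner_def sum_distrib_left sum_negf[symmetric])
  finally show ?thesis .
qed

lemma omega_trace_mat_diag:
  "omega_trace S (mat_diag (2 * S) d) = - 2 * (\<Sum>k<S. d (2 * k) * d (Suc (2 * k)))"
  by (subst omega_trace_eq_mode_products) (auto simp: mat_diag_def partner_eq_iff)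

lemma omega_trace_symplectic_eigenvalues:
  assumes "symplectic_eigenvalues S G nu"
  shows "omega_trace S G = - 2 * (\<Sum>x\<leftarrow>nu. x\<^sup>2)"
proof -
  obtain A where A: "symplectic S A" "G = A * williamson_diag S nu * transpose_mat A"
    and len: "length nu = S"
    using assms unfolding symplectic_eigenvalues_def by auto
  have W: "williamson_diag S nu = mat_diag (2 * S) (\<lambda>i. nu ! (i div 2))"
    unfolding williamson_diag_def mat_diag_def by auto
  have "omega_trace S G = omega_trace S (williamson_diag S nu)"
    unfolding A(2) by (rule omega_trace_symplectic_congruence[OF A(1)]) (simp add: W)
  also have "\<dots> = - 2 * (\<Sum>k<S. (nu ! k)\<^sup>2)"
    unfolding W omega_trace_mat_diag by (simp add: power2_eq_square)
  finally show ?thesis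
    using len by (simp add: sum_list_sum_nth atLeast0LessThan)
qed

lemma symplectic_eigenvalues_mset_neq:
  assumes "symplectic_eigenvalues S G1 nu1" "symplectic_eigenvalues S G2 nu2"
    and "omega_trace S G1 \<noteq> omega_trace S G2"
  shows "mset nu1 \<noteq> mset nu2"
proof
  assume "mset nu1 = mset nu2"
  then have "(\<Sum>x\<leftarrow>nu1. x\<^sup>2) = (\<Sum>x\<leftarrow>nu2. x\<^sup>2)"
    by (metis mset_map sum_mset_sum_list)
  then show False
    using assms omega_trace_symplectic_eigenvalues by metis
qed

lemma not_SpO_congruent:
  assumes "G1 \<in> carrier_mat (2 * S) (2 * S)" "omega_trace S G1 \<noteq> omega_trace S G2"
  shows "\<not> (\<exists>K \<in> SpO S. G2 = K * G1 * transpose_mat K)"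
  using assms omega_trace_symplectic_congruence unfolding SpO_def by auto

section \<open>Orthogonal congruence of diagonal matrices\<close>

lemma dim_mat_diag [simp]: "dim_row (mat_diag n d) = n" "dim_col (mat_diag n d) = n"
  unfolding mat_diag_def by auto

lemma char_poly_mat_diag: "char_poly (mat_diag n d) = (\<Prod>a \<leftarrow> map d [0..<n]. [:- a, 1:])"
proof -
  have "char_poly (mat_diag n d) = (\<Prod>a \<leftarrow> diag_mat (mat_diag n d). [:- a, 1:])"
    by (rule char_poly_upper_triangular[OF mat_diag_dim]) (auto simp: mat_diag_def)
  also have "diag_mat (mat_diag n d) = map d [0..<n]"
    by (auto simp: diag_mat_def mat_diag_def intro: nth_equalityI)
  finally show ?thesis .
qed

lemma orthogonal_real_right_inverse:
  "orthogonal_real n Q \<Longrightarrow> Q * transpose_mat Q = 1\<^sub>m n"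
  using mat_mult_left_right_inverse[of "transpose_mat Q" n Q] unfolding orthogonal_real_def by auto

lemma char_poly_orthogonal_congruence:
  assumes Q: "orthogonal_real n Q" and A: "A \<in> carrier_mat n n"
  shows "char_poly (Q * A * transpose_mat Q) = char_poly A"
proof (rule char_poly_similar, rule similar_matI)
  show "{Q * A * transpose_mat Q, A, Q, transpose_mat Q} \<subseteq> carrier_mat n n"
    using Q A unfolding orthogonal_real_def by auto
  show "Q * transpose_mat Q = 1\<^sub>m n" by (rule orthogonal_real_right_inverse[OF Q])
  show "transpose_mat Q * Q = 1\<^sub>m n" using Q unfolding orthogonal_real_def by simp
qed simp

lemma eigenspectrum_orthogonal_congruence_mat_diag:
  assumes Q: "orthogonal_real n Q" and sorted: "sorted_wrt (\<ge>) Lam"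
    and entries: "mset (map d [0..<n]) = mset Lam"
  shows "eigenspectrum (Q * mat_diag n d * transpose_mat Q) Lam"
  unfolding eigenspectrum_def
proof (intro conjI)
  have "length Lam = n" using arg_cong[OF entries, of size] by simp
  then show "length Lam = dim_row (Q * mat_diag n d * transpose_mat Q)"
    using Q unfolding orthogonal_real_def by (metis carrier_matD(1) index_mult_mat(2))
  have "char_poly (Q * mat_diag n d * transpose_mat Q) = (\<Prod>a \<leftarrow> map d [0..<n]. [:- a, 1:])"
    unfolding char_poly_orthogonal_congruence[OF Q mat_diag_dim] char_poly_mat_diag ..
  also have "\<dots> = prod_mset (image_mset (\<lambda>a. [:- a, 1:]) (mset (map d [0..<n])))"
    by (simp only: mset_map[symmetric] prod_mset_prod_list)
  also have "\<dots> = (\<Prod>a \<leftarrow> Lam. [:- a, 1:])"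
    unfolding entries by (simp only: mset_map[symmetric] prod_mset_prod_list)
  finally show "char_poly (Q * mat_diag n d * transpose_mat Q) = (\<Prod>a \<leftarrow> Lam. [:- a, 1:])" .
qed (rule sorted)

lemma length_eigenspectrum_quantum_CM:
  assumes "quantum_CM S G" "eigenspectrum G Lam"
  shows "length Lam = 2 * S"
proof -
  have "G \<in> carrier_mat (2 * S) (2 * S)" using assms(1) unfolding quantum_CM_def by blast
  then show ?thesis using assms(2) unfolding eigenspectrum_def by simp
qed

lemma pos_def_real_mat_diag:
  assumes pos: "\<And>i. i < n \<Longrightarrow> d i > 0"
  shows "pos_def_real n (mat_diag n d)"
  unfolding pos_def_real_def
proof (intro conjI ballI impI mat_diag_dim)
  fix w :: "real vec" assume w: "w \<in> carrier_vec n" and w0: "w \<noteq> 0\<^sub>v n"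
  obtain i where i: "i < n" "w $ i \<noteq> 0"
    using w w0 by (metis carrier_vecD eq_vecI index_zero_vec(1,2))
  have "mat_diag n d *\<^sub>v w = vec n (\<lambda>j. d j * w $ j)"
    using w by (intro eq_vecI) (auto simp: mat_diag_def scalar_prod_def if_distrib[of "\<lambda>x. x * _"] cong: if_cong)
  then have "w \<bullet> (mat_diag n d *\<^sub>v w) = (\<Sum>j<n. d j * (w $ j)\<^sup>2)"
    using w by (simp add: scalar_prod_def atLeast0LessThan power2_eq_square ac_simps)
  also have "\<dots> > 0"
  proof (rule sum_pos2[of _ i])
    show "0 \<le> d j * (w $ j)\<^sup>2" if "j \<in> {..<n}" for j
      using pos[of j] that by simp
  qed (use i pos[of i] in auto)
  finally show "w \<bullet> (mat_diag n d *\<^sub>v w) > 0" .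
qed

lemma pos_def_real_orthogonal_congruence:
  assumes Q: "orthogonal_real n Q" and A: "pos_def_real n A"
  shows "pos_def_real n (Q * A * transpose_mat Q)"
  unfolding pos_def_real_def
proof (intro conjI ballI impI)
  have Qc: "Q \<in> carrier_mat n n" and Ac: "A \<in> carrier_mat n n"
    using Q A unfolding orthogonal_real_def pos_def_real_def by auto
  then show "Q * A * transpose_mat Q \<in> carrier_mat n n" by simp
  fix x :: "real vec" assume x: "x \<in> carrier_vec n" and x0: "x \<noteq> 0\<^sub>v n"
  let ?w = "transpose_mat Q *\<^sub>v x"
  have w: "?w \<in> carrier_vec n" using Qc x by simp
  have "Q *\<^sub>v ?w = x"
    using Qc x orthogonal_real_right_inverse[OF Q] by (simp flip: assoc_mult_mat_vec)
  moreover have "Q *\<^sub>v 0\<^sub>v n = 0\<^sub>v n"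
    using Qc by (intro eq_vecI) (auto simp: scalar_prod_def)
  ultimately have "?w \<noteq> 0\<^sub>v n" using x0 by auto
  then have "?w \<bullet> (A *\<^sub>v ?w) > 0" using A w unfolding pos_def_real_def by blast
  also have "?w \<bullet> (A *\<^sub>v ?w) = x \<bullet> (Q *\<^sub>v (A *\<^sub>v ?w))"
    using Qc Ac w x by (intro transpose_vec_mult_scalar) auto
  also have "Q *\<^sub>v (A *\<^sub>v ?w) = (Q * A * transpose_mat Q) *\<^sub>v x"
    using Qc Ac x by (simp del: assoc_mult_mat add: assoc_mult_mat_vec[of "Q * A" n n])
  finally show "x \<bullet> ((Q * A * transpose_mat Q) *\<^sub>v x) > 0" .
qed

section \<open>Rotation in a coordinate plane\<close>

definition givens_mat :: "nat \<Rightarrow> nat \<Rightarrow> nat \<Rightarrow> real \<Rightarrow> real \<Rightarrow> real mat" where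
  "givens_mat n u v c s = mat n n (\<lambda>(i, j). if i = j then (if i = u \<or> i = v then c else 1)
     else if i = u \<and> j = v then - s else if i = v \<and> j = u then s else 0)"

lemma givens_mat_carrier [simp]: "givens_mat n u v c s \<in> carrier_mat n n"
  unfolding givens_mat_def by simp

lemma givens_mat_dim [simp]: "dim_row (givens_mat n u v c s) = n" "dim_col (givens_mat n u v c s) = n"
  unfolding givens_mat_def by auto

lemma transpose_givens_mat: "u \<noteq> v \<Longrightarrow> transpose_mat (givens_mat n u v c s) = givens_mat n u v c (- s)"
  unfolding givens_mat_def by (rule eq_matI) auto

lemma givens_mat_one_zero [simp]: "givens_mat n u v 1 0 = 1\<^sub>m n"
  unfolding givens_mat_def by (rule eq_matI) auto

lemma givens_mat_mult_index:
  assumes X: "X \<in> carrier_mat n n" and ij: "i < n" "j < n" and uv: "u < n" "v < n" "u \<noteq> v"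
  shows "(givens_mat n u v c s * X) $$ (i, j) = (if i = u then c * X $$ (u, j) - s * X $$ (v, j)
      else if i = v then s * X $$ (u, j) + c * X $$ (v, j) else X $$ (i, j))"
proof -
  have "(givens_mat n u v c s * X) $$ (i, j) = (\<Sum>l<n. givens_mat n u v c s $$ (i, l) * X $$ (l, j))"
    using X ij by (simp add: scalar_prod_def atLeast0LessThan)
  also have "\<dots> = (\<Sum>l<n. (if l = u then (if i = u then c else if i = v then s else 0) * X $$ (u, j) else 0)
     + (if l = v then (if i = u then - s else if i = v then c else 0) * X $$ (v, j) else 0)
     + (if l = i \<and> i \<noteq> u \<and> i \<noteq> v then X $$ (i, j) else 0))"
    using ij uv by (intro sum.cong refl) (auto simp: givens_mat_def)
  also have "\<dots> = (if i = u then c * X $$ (u, j) - s * X $$ (v, j)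
      else if i = v then s * X $$ (u, j) + c * X $$ (v, j) else X $$ (i, j))"
    using ij uv by (simp add: sum.distrib)
  finally show ?thesis .
qed

lemma mult_givens_mat_index:
  assumes X: "X \<in> carrier_mat n n" and ij: "i < n" "j < n" and uv: "u < n" "v < n" "u \<noteq> v"
  shows "(X * givens_mat n u v c s) $$ (i, j) = (if j = u then c * X $$ (i, u) + s * X $$ (i, v)
      else if j = v then - s * X $$ (i, u) + c * X $$ (i, v) else X $$ (i, j))"
proof -
  have "(X * givens_mat n u v c s) $$ (i, j) = (\<Sum>l<n. X $$ (i, l) * givens_mat n u v c s $$ (l, j))"
    using X ij by (simp add: scalar_prod_def atLeast0LessThan)
  also have "\<dots> = (\<Sum>l<n. (if l = u then (if j = u then c else if j = v then - s else 0) * X $$ (i, u) else 0)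
     + (if l = v then (if j = u then s else if j = v then c else 0) * X $$ (i, v) else 0)
     + (if l = j \<and> j \<noteq> u \<and> j \<noteq> v then X $$ (i, j) else 0))"
    using ij uv by (intro sum.cong refl) (auto simp: givens_mat_def)
  also have "\<dots> = (if j = u then c * X $$ (i, u) + s * X $$ (i, v)
      else if j = v then - s * X $$ (i, u) + c * X $$ (i, v) else X $$ (i, j))"
    using ij uv by (simp add: sum.distrib)
  finally show ?thesis .
qed

lemma orthogonal_real_givens_mat:
  assumes uv: "u < n" "v < n" "u \<noteq> v" and cs: "c\<^sup>2 + s\<^sup>2 = 1"
  shows "orthogonal_real n (givens_mat n u v c s)"
proof -
  have "givens_mat n u v c (- s) * givens_mat n u v c s = 1\<^sub>m n"
    using uv cs by (intro eq_matI) ((simp_all add: givens_mat_mult_index del: index_mult_mat(1)),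
      (auto simp: givens_mat_def power2_eq_square))
  then show ?thesis unfolding orthogonal_real_def transpose_givens_mat[OF uv(3)] by simp
qed

definition rotated_mat_diag :: "nat \<Rightarrow> nat \<Rightarrow> nat \<Rightarrow> real \<Rightarrow> real \<Rightarrow> (nat \<Rightarrow> real) \<Rightarrow> real mat" where
  "rotated_mat_diag n u v c s d = givens_mat n u v c s * mat_diag n d * transpose_mat (givens_mat n u v c s)"

lemma rotated_mat_diag_index:
  assumes ij: "i < n" "j < n" and uv: "u < n" "v < n" "u \<noteq> v"
  shows "rotated_mat_diag n u v c s d $$ (i, j) =
    (if i = u \<and> j = u then c\<^sup>2 * d u + s\<^sup>2 * d v
     else if i = v \<and> j = v then s\<^sup>2 * d u + c\<^sup>2 * d v
     else if i = u \<and> j = v \<or> i = v \<and> j = u then c * s * (d u - d v)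
     else if i = j then d i else 0)"
proof -
  let ?X = "mat n n (\<lambda>(i, j). givens_mat n u v c s $$ (i, j) * d j)"
  have "givens_mat n u v c s * mat_diag n d = ?X"
    by (rule mat_diag_mult_right) simp
  moreover have "(?X * givens_mat n u v c (- s)) $$ (i, j) = (if j = u then c * ?X $$ (i, u) - s * ?X $$ (i, v)
      else if j = v then s * ?X $$ (i, u) + c * ?X $$ (i, v) else ?X $$ (i, j))"
    using ij uv by (subst mult_givens_mat_index) auto
  ultimately show ?thesis
    unfolding rotated_mat_diag_def transpose_givens_mat[OF uv(3)] using ij uv
    by (auto simp: givens_mat_def power2_eq_square algebra_simps)
qed

lemma rotated_mat_diag_diag:
  "i < n \<Longrightarrow> u < n \<Longrightarrow> v < n \<Longrightarrow> u \<noteq> v \<Longrightarrow> rotated_mat_diag n u v c s d $$ (i, i) =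
    (if i = u then c\<^sup>2 * d u + s\<^sup>2 * d v else if i = v then s\<^sup>2 * d u + c\<^sup>2 * d v else d i)"
  by (simp add: rotated_mat_diag_index)

lemma rotated_mat_diag_off_diag:
  "i < n \<Longrightarrow> j < n \<Longrightarrow> i \<noteq> j \<Longrightarrow> u < n \<Longrightarrow> v < n \<Longrightarrow> u \<noteq> v \<Longrightarrow>
    rotated_mat_diag n u v c s d $$ (i, j) = (if i = u \<and> j = v \<or> i = v \<and> j = u then c * s * (d u - d v) else 0)"
  by (auto simp: rotated_mat_diag_index)

lemma rotated_mat_diag_carrier [simp]: "rotated_mat_diag n u v c s d \<in> carrier_mat n n"
  unfolding rotated_mat_diag_def by (intro mult_carrier_mat_sq) auto

lemma rotated_mat_diag_dim [simp]:
  "dim_row (rotated_mat_diag n u v c s d) = n" "dim_col (rotated_mat_diag n u v c s d) = n"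
  using rotated_mat_diag_carrier by blast+

lemma rotated_mat_diag_one_zero [simp]: "rotated_mat_diag n u v 1 0 d = mat_diag n d"
  unfolding rotated_mat_diag_def by simp

section \<open>Positivity of \<open>G + i\<Omega>\<close>\<close>

text \<open>The contribution of one mode, with diagonal entries \<open>a\<close>, \<open>b\<close> of \<open>G\<close> and components \<open>x\<close>, \<open>y\<close>
  of \<open>w\<close>, to the quadratic form \<open>w\<^sup>* (G + i\<Omega>) w\<close>.\<close>

definition mode_form :: "real \<Rightarrow> real \<Rightarrow> complex \<Rightarrow> complex \<Rightarrow> real" where
  "mode_form a b x y = a * (cmod x)\<^sup>2 + b * (cmod y)\<^sup>2 - 2 * Im (cnj x * y)"

lemma Im_cnj_mult_le: "Im (cnj x * y) \<le> cmod x * cmod y"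
  by (metis abs_Im_le_cmod abs_le_D1 complex_mod_cnj norm_mult)

lemma quadratic_lower_bound:
  fixes a b X Y :: real
  assumes "b > 0"
  shows "(a - 1 / b) * X\<^sup>2 \<le> a * X\<^sup>2 + b * Y\<^sup>2 - 2 * X * Y"
proof -
  have "b * (a * X\<^sup>2 + b * Y\<^sup>2 - 2 * X * Y - (a - 1 / b) * X\<^sup>2) = (b * Y - X)\<^sup>2"
    using assms by (simp add: algebra_simps power2_eq_square)
  also have "\<dots> \<ge> 0" by simp
  finally have "a * X\<^sup>2 + b * Y\<^sup>2 - 2 * X * Y - (a - 1 / b) * X\<^sup>2 \<ge> 0"
    using assms by (metis mult_pos_neg not_le)
  then show ?thesis by simp
qed

lemma mode_form_ge_left: "b > 0 \<Longrightarrow> (a - 1 / b) * (cmod x)\<^sup>2 \<le> mode_form a b x y"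
  using quadratic_lower_bound[of b a "cmod x" "cmod y"] Im_cnj_mult_le[of x y]
  unfolding mode_form_def by linarith

lemma mode_form_ge_right: "a > 0 \<Longrightarrow> (b - 1 / a) * (cmod y)\<^sup>2 \<le> mode_form a b x y"
  using quadratic_lower_bound[of a b "cmod y" "cmod x"] Im_cnj_mult_le[of x y]
  unfolding mode_form_def mult.assoc mult.commute[of "cmod y" "cmod x"] by linarith

lemma mode_form_nonneg:
  assumes "a > 0" "a * b \<ge> 1"
  shows "mode_form a b x y \<ge> 0"
proof -
  have "b - 1 / a \<ge> 0" using assms by (simp add: field_simps)
  then have "0 \<le> (b - 1 / a) * (cmod y)\<^sup>2" by simp
  also have "\<dots> \<le> mode_form a b x y" by (rule mode_form_ge_right[OF assms(1)])
  finally show ?thesis .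
qed

lemma mode_form_complex:
  "complex_of_real a * (cnj x * x) + \<i> * (cnj x * y) + (complex_of_real b * (cnj y * y) - \<i> * (cnj y * x))
   = complex_of_real (mode_form a b x y)"
proof -
  have "cmod z * cmod z = Re z * Re z + Im z * Im z" for z
    by (metis cmod_power2 power2_eq_square)
  then show ?thesis
    unfolding mode_form_def by (simp add: complex_eq_iff algebra_simps power2_eq_square)
qed

lemma binary_quadratic_form_nonneg:
  fixes P R B x y z :: real
  assumes "P \<ge> 0" "R \<ge> 0" "B\<^sup>2 \<le> P * R" "\<bar>z\<bar> \<le> x * y" "x \<ge> 0" "y \<ge> 0"
  shows "P * x\<^sup>2 + R * y\<^sup>2 + 2 * B * z \<ge> 0"
proof -
  have "\<bar>B * z\<bar> \<le> \<bar>B\<bar> * (x * y)" using assms(4) by (simp add: abs_mult mult_left_mono)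
  then have Bz: "2 * B * z \<ge> - 2 * \<bar>B\<bar> * (x * y)" by linarith
  have "P * x\<^sup>2 + R * y\<^sup>2 - 2 * \<bar>B\<bar> * (x * y) \<ge> 0"
  proof (cases "P = 0")
    case True
    then show ?thesis using assms by simp
  next
    case False
    then have "P > 0" using assms(1) by simp
    have "P * (P * x\<^sup>2 + R * y\<^sup>2 - 2 * \<bar>B\<bar> * (x * y)) = (P * x - \<bar>B\<bar> * y)\<^sup>2 + (P * R - B\<^sup>2) * y\<^sup>2"
      by (simp add: algebra_simps power2_eq_square)
    also have "\<dots> \<ge> 0" using assms(3) by simp
    finally show ?thesis using \<open>P > 0\<close> by (metis mult_pos_neg not_le)
  qed
  then show ?thesis using Bz by linarith
qed

lemma plus_i_Omega_mult_vec_index: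
  fixes G :: "real mat" and B :: real
  assumes G: "G \<in> carrier_mat (2 * S) (2 * S)" and w: "w \<in> carrier_vec (2 * S)" and i: "i < 2 * S"
    and uv: "u < 2 * S" "v < 2 * S" "u \<noteq> v"
    and sparse: "\<forall>i<2 * S. \<forall>j<2 * S. i \<noteq> j \<longrightarrow> i = u \<and> j = v \<or> i = v \<and> j = u \<or> G $$ (i, j) = 0"
    and B: "G $$ (u, v) = B" "G $$ (v, u) = B"
  shows "((map_mat complex_of_real G + \<i> \<cdot>\<^sub>m map_mat complex_of_real (Omega S)) *\<^sub>v w) $ i =
    complex_of_real (G $$ (i, i)) * w $ i
    + (if i = u then complex_of_real B * w $ v else 0) + (if i = v then complex_of_real B * w $ u else 0)
    + \<i> * complex_of_real (mode_sign i) * w $ partner i"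
proof -
  let ?M = "map_mat complex_of_real G + \<i> \<cdot>\<^sub>m map_mat complex_of_real (Omega S)"
  have "(?M *\<^sub>v w) $ i = (\<Sum>j<2 * S. ?M $$ (i, j) * w $ j)"
    using G w i by (simp add: scalar_prod_def atLeast0LessThan)
  also have "\<dots> = (\<Sum>j<2 * S. (if j = i then complex_of_real (G $$ (i, i)) * w $ i else 0)
     + (if i = u \<and> j = v then complex_of_real B * w $ v else 0)
     + (if i = v \<and> j = u then complex_of_real B * w $ u else 0)
     + (if j = partner i then \<i> * complex_of_real (mode_sign i) * w $ partner i else 0))"
  proof (intro sum.cong refl)
    fix j assume "j \<in> {..<2 * S}"
    then have j: "j < 2 * S" by simp
    have M: "?M $$ (i, j) = complex_of_real (G $$ (i, j)) + \<i> * complex_of_real (if j = partner i then mode_sign i else 0)"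
      using G i j by (simp add: Omega_index)
    show "?M $$ (i, j) * w $ j = (if j = i then complex_of_real (G $$ (i, i)) * w $ i else 0)
     + (if i = u \<and> j = v then complex_of_real B * w $ v else 0)
     + (if i = v \<and> j = u then complex_of_real B * w $ u else 0)
     + (if j = partner i then \<i> * complex_of_real (mode_sign i) * w $ partner i else 0)"
      using sparse[rule_format, OF i j] uv B partner_neq[of i] unfolding M by (auto simp: distrib_right)
  qed
  also have "\<dots> = complex_of_real (G $$ (i, i)) * w $ i
    + (if i = u then complex_of_real B * w $ v else 0) + (if i = v then complex_of_real B * w $ u else 0)
    + \<i> * complex_of_real (mode_sign i) * w $ partner i"
    using i partner_less[OF i] uv by (simp add: sum.distrib)
  finally show ?thesis .
qed

lemma quadratic_form_plus_i_Omega: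
  fixes G :: "real mat" and B :: real
  assumes G: "G \<in> carrier_mat (2 * S) (2 * S)" and w: "w \<in> carrier_vec (2 * S)"
    and uv: "u < 2 * S" "v < 2 * S" "u \<noteq> v"
    and sparse: "\<forall>i<2 * S. \<forall>j<2 * S. i \<noteq> j \<longrightarrow> i = u \<and> j = v \<or> i = v \<and> j = u \<or> G $$ (i, j) = 0"
    and B: "G $$ (u, v) = B" "G $$ (v, u) = B"
  shows "conjugate w \<bullet> ((map_mat complex_of_real G + \<i> \<cdot>\<^sub>m map_mat complex_of_real (Omega S)) *\<^sub>v w) =
    complex_of_real ((\<Sum>k<S. mode_form (G $$ (2 * k, 2 * k)) (G $$ (Suc (2 * k), Suc (2 * k))) (w $ (2 * k)) (w $ Suc (2 * k)))
      + 2 * B * Re (cnj (w $ u) * w $ v))"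
proof -
  let ?M = "map_mat complex_of_real G + \<i> \<cdot>\<^sub>m map_mat complex_of_real (Omega S)"
  let ?diag = "\<lambda>i. complex_of_real (G $$ (i, i)) * (cnj (w $ i) * w $ i)
    + \<i> * complex_of_real (mode_sign i) * (cnj (w $ i) * w $ partner i)"
  let ?coupling = "\<lambda>i. (if i = u then complex_of_real B * (cnj (w $ u) * w $ v) else 0)
    + (if i = v then complex_of_real B * (cnj (w $ v) * w $ u) else 0)"
  have "conjugate w \<bullet> (?M *\<^sub>v w) = (\<Sum>i<2 * S. cnj (w $ i) * (?M *\<^sub>v w) $ i)"
    using w by (simp add: scalar_prod_def atLeast0LessThan)
  also have "\<dots> = (\<Sum>i<2 * S. ?diag i + ?coupling i)"
  proof (intro sum.cong refl)
    fix i assume "i \<in> {..<2 * S}"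
    then have i: "i < 2 * S" by simp
    show "cnj (w $ i) * (?M *\<^sub>v w) $ i = ?diag i + ?coupling i"
      unfolding plus_i_Omega_mult_vec_index[OF G w i uv sparse B] by (auto simp: algebra_simps)
  qed
  also have "\<dots> = (\<Sum>i<2 * S. ?diag i)
      + (complex_of_real B * (cnj (w $ u) * w $ v) + complex_of_real B * (cnj (w $ v) * w $ u))"
    using uv by (simp add: sum.distrib)
  also have "(\<Sum>i<2 * S. ?diag i) = (\<Sum>k<S. complex_of_real
      (mode_form (G $$ (2 * k, 2 * k)) (G $$ (Suc (2 * k), Suc (2 * k))) (w $ (2 * k)) (w $ Suc (2 * k))))"
    unfolding sum_modes mode_form_complex[symmetric] by (simp add: partner_def mode_sign_def)
  also have "complex_of_real B * (cnj (w $ u) * w $ v) + complex_of_real B * (cnj (w $ v) * w $ u)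
      = complex_of_real (2 * B * Re (cnj (w $ u) * w $ v))"
    by (simp add: complex_eq_iff algebra_simps)
  finally show ?thesis by simp
qed

text \<open>Only the modes of \<open>u\<close> and \<open>v\<close> are coupled; the condition on \<open>G\<^sub>u\<^sub>v\<close> is that of
  the \<open>2 \<times> 2\<close> Schur complement left after minimising over the partner coordinates.\<close>

lemma psd_complex_plus_i_Omega:
  fixes G :: "real mat"
  assumes G: "G \<in> carrier_mat (2 * S) (2 * S)"
    and uv: "u < 2 * S" "v < 2 * S" "u div 2 \<noteq> v div 2"
    and sparse: "\<forall>i<2 * S. \<forall>j<2 * S. i \<noteq> j \<longrightarrow> i = u \<and> j = v \<or> i = v \<and> j = u \<or> G $$ (i, j) = 0"
    and sym: "G $$ (v, u) = G $$ (u, v)"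
    and pos: "\<And>i. i < 2 * S \<Longrightarrow> G $$ (i, i) > 0"
    and modes: "\<And>k. k < S \<Longrightarrow> k \<noteq> u div 2 \<Longrightarrow> k \<noteq> v div 2 \<Longrightarrow>
      G $$ (2 * k, 2 * k) * G $$ (Suc (2 * k), Suc (2 * k)) \<ge> 1"
    and P: "G $$ (u, u) - 1 / G $$ (partner u, partner u) \<ge> 0"
    and R: "G $$ (v, v) - 1 / G $$ (partner v, partner v) \<ge> 0"
    and schur: "(G $$ (u, v))\<^sup>2 \<le> (G $$ (u, u) - 1 / G $$ (partner u, partner u)) * (G $$ (v, v) - 1 / G $$ (partner v, partner v))"
  shows "psd_complex (2 * S) (map_mat complex_of_real G + \<i> \<cdot>\<^sub>m map_mat complex_of_real (Omega S))"
  unfolding psd_complex_def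
proof (intro conjI ballI)
  show "map_mat complex_of_real G + \<i> \<cdot>\<^sub>m map_mat complex_of_real (Omega S) \<in> carrier_mat (2 * S) (2 * S)"
    using G by simp
  fix w :: "complex vec" assume w: "w \<in> carrier_vec (2 * S)"
  let ?f = "\<lambda>k. mode_form (G $$ (2 * k, 2 * k)) (G $$ (Suc (2 * k), Suc (2 * k))) (w $ (2 * k)) (w $ Suc (2 * k))"
  let ?m = "u div 2" and ?n = "v div 2"
  have "u \<noteq> v" using uv by auto
  note form = quadratic_form_plus_i_Omega[OF G w uv(1,2) this sparse refl sym]
  then show "Im (conjugate w \<bullet> ((map_mat complex_of_real G + \<i> \<cdot>\<^sub>m map_mat complex_of_real (Omega S)) *\<^sub>v w)) = 0"
    by simp
  have f_mode: "?f (i div 2) \<ge> (G $$ (i, i) - 1 / G $$ (partner i, partner i)) * (cmod (w $ i))\<^sup>2" if "i < 2 * S" for i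
    using that pos[of i] pos[OF partner_less[OF that]]
    by (cases rule: mode_cases[of i]) (metis mode_form_ge_left, metis mode_form_ge_right)
  have "(\<Sum>k<S. ?f k) = ?f ?m + ?f ?n + (\<Sum>k\<in>{..<S} - {?m} - {?n}. ?f k)"
    using uv by (simp add: sum.remove[of _ ?m] sum.remove[of _ ?n] algebra_simps)
  moreover have "(\<Sum>k\<in>{..<S} - {?m} - {?n}. ?f k) \<ge> 0"
    using pos modes by (intro sum_nonneg mode_form_nonneg) auto
  ultimately have "(\<Sum>k<S. ?f k) \<ge> (G $$ (u, u) - 1 / G $$ (partner u, partner u)) * (cmod (w $ u))\<^sup>2
      + (G $$ (v, v) - 1 / G $$ (partner v, partner v)) * (cmod (w $ v))\<^sup>2"
    using f_mode[OF uv(1)] f_mode[OF uv(2)] by linarith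
  moreover have "\<bar>Re (cnj (w $ u) * w $ v)\<bar> \<le> cmod (w $ u) * cmod (w $ v)"
    by (metis abs_Re_le_cmod complex_mod_cnj norm_mult)
  ultimately have "(\<Sum>k<S. ?f k) + 2 * G $$ (u, v) * Re (cnj (w $ u) * w $ v) \<ge> 0"
    using binary_quadratic_form_nonneg[OF P R schur _ norm_ge_zero norm_ge_zero] by fastforce
  then show "Re (conjugate w \<bullet> ((map_mat complex_of_real G + \<i> \<cdot>\<^sub>m map_mat complex_of_real (Omega S)) *\<^sub>v w)) \<ge> 0"
    unfolding form Re_complex_of_real .
qed

lemma quantum_CM_rotated_mat_diag:
  fixes S u v :: nat and c s :: real and d :: "nat \<Rightarrow> real"
  assumes uv: "u < 2 * S" "v < 2 * S" "u div 2 \<noteq> v div 2" and cs: "c\<^sup>2 + s\<^sup>2 = 1"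
    and pos: "\<And>i. i < 2 * S \<Longrightarrow> d i > 0"
    and modes: "\<And>k. k < S \<Longrightarrow> d (2 * k) * d (Suc (2 * k)) \<ge> 1"
    and P: "c\<^sup>2 * d u + s\<^sup>2 * d v - 1 / d (partner u) \<ge> 0"
    and R: "s\<^sup>2 * d u + c\<^sup>2 * d v - 1 / d (partner v) \<ge> 0"
    and schur: "(c * s * (d u - d v))\<^sup>2 \<le>
      (c\<^sup>2 * d u + s\<^sup>2 * d v - 1 / d (partner u)) * (s\<^sup>2 * d u + c\<^sup>2 * d v - 1 / d (partner v))"
  shows "quantum_CM S (rotated_mat_diag (2 * S) u v c s d)"
proof -
  let ?G = "rotated_mat_diag (2 * S) u v c s d"
  have "u \<noteq> v" using uv by auto
  note diag = rotated_mat_diag_diag[OF _ uv(1,2) this] and off_diag = rotated_mat_diag_off_diag[OF _ _ _ uv(1,2) this]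
  have psd: "psd_complex (2 * S) (map_mat complex_of_real ?G + \<i> \<cdot>\<^sub>m map_mat complex_of_real (Omega S))"
  proof (rule psd_complex_plus_i_Omega[OF rotated_mat_diag_carrier uv])
    show "\<forall>i<2 * S. \<forall>j<2 * S. i \<noteq> j \<longrightarrow> i = u \<and> j = v \<or> i = v \<and> j = u \<or> ?G $$ (i, j) = 0"
      using off_diag by auto
    show "?G $$ (v, u) = ?G $$ (u, v)" using off_diag uv \<open>u \<noteq> v\<close> by auto
    show "?G $$ (i, i) > 0" if "i < 2 * S" for i
    proof -
      have "1 / d (partner u) > 0" "1 / d (partner v) > 0" using pos partner_less uv by auto
      then show ?thesis
        using diag[OF that] pos[OF that] P R \<open>u \<noteq> v\<close> by (auto simp del: zero_less_divide_1_iff)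
    qed
    show "?G $$ (2 * k, 2 * k) * ?G $$ (Suc (2 * k), Suc (2 * k)) \<ge> 1"
      if "k < S" "k \<noteq> u div 2" "k \<noteq> v div 2" for k
      using that diag modes[of k] by auto
  qed (use diag off_diag partner_less partner_notin_other_mode[OF uv(3)] P R schur uv \<open>u \<noteq> v\<close> in auto)
  have "transpose_mat ?G = ?G"
    by (intro eq_matI) (auto simp: rotated_mat_diag_index uv(1,2) \<open>u \<noteq> v\<close>)
  moreover have "pos_def_real (2 * S) ?G"
    unfolding rotated_mat_diag_def
    using orthogonal_real_givens_mat[OF uv(1,2) \<open>u \<noteq> v\<close> cs] pos_def_real_mat_diag[OF pos]
    by (rule pos_def_real_orthogonal_congruence)
  ultimately show ?thesis
    unfolding quantum_CM_def using psd by simp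
qed

lemma rotated_mat_diag_mode_product:
  fixes S u v :: nat and c s :: real and d :: "nat \<Rightarrow> real"
  defines "G \<equiv> rotated_mat_diag (2 * S) u v c s d"
  assumes uv: "u < 2 * S" "v < 2 * S" "u div 2 \<noteq> v div 2" and cs: "c\<^sup>2 + s\<^sup>2 = 1" and k: "k < S"
  shows "G $$ (2 * k, 2 * k) * G $$ (Suc (2 * k), Suc (2 * k)) = d (2 * k) * d (Suc (2 * k))
      + (if k = u div 2 then s\<^sup>2 * (d v - d u) * d (partner u) else 0)
      + (if k = v div 2 then s\<^sup>2 * (d u - d v) * d (partner v) else 0)"
proof -
  have "u \<noteq> v" using uv by auto
  note diag = rotated_mat_diag_diag[OF _ uv(1,2) this, of _ c s d, folded G_def]
  note not_uv = partner_notin_other_mode[OF uv(3)]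
  have c2: "c\<^sup>2 = 1 - s\<^sup>2" using cs by simp
  have mode_of: "G $$ (2 * (i div 2), 2 * (i div 2)) * G $$ (Suc (2 * (i div 2)), Suc (2 * (i div 2)))
      = G $$ (i, i) * G $$ (partner i, partner i)"
    "d (2 * (i div 2)) * d (Suc (2 * (i div 2))) = d i * d (partner i)" for i
    by (rule mode_product_eq[of "\<lambda>j. G $$ (j, j)"], rule mode_product_eq)
  consider "k = u div 2" | "k = v div 2" | "k \<noteq> u div 2" "k \<noteq> v div 2" by blast
  then show ?thesis
  proof cases
    case 1
    have "G $$ (u, u) * G $$ (partner u, partner u) = (c\<^sup>2 * d u + s\<^sup>2 * d v) * d (partner u)"
      using diag[OF uv(1)] diag[OF partner_less[OF uv(1)]] not_uv by simp
    also have "\<dots> = d u * d (partner u) + s\<^sup>2 * (d v - d u) * d (partner u)"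
      by (simp add: c2 algebra_simps)
    finally show ?thesis using 1 uv(3) mode_of[of u] by simp
  next
    case 2
    have "G $$ (v, v) * G $$ (partner v, partner v) = (s\<^sup>2 * d u + c\<^sup>2 * d v) * d (partner v)"
      using diag[OF uv(2)] diag[OF partner_less[OF uv(2)]] not_uv \<open>u \<noteq> v\<close> by simp
    also have "\<dots> = d v * d (partner v) + s\<^sup>2 * (d u - d v) * d (partner v)"
      by (simp add: c2 algebra_simps)
    finally show ?thesis using 2 uv(3) mode_of[of v] by simp
  next
    case 3
    then have "2 * k \<noteq> u" "2 * k \<noteq> v" "Suc (2 * k) \<noteq> u" "Suc (2 * k) \<noteq> v" by auto
    then show ?thesis using 3 diag k by simp
  qed
qed

lemma omega_trace_rotated_mat_diag:
  fixes S u v :: nat and c s :: real and d :: "nat \<Rightarrow> real"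
  assumes uv: "u < 2 * S" "v < 2 * S" "u div 2 \<noteq> v div 2" and cs: "c\<^sup>2 + s\<^sup>2 = 1"
  shows "omega_trace S (rotated_mat_diag (2 * S) u v c s d)
    = omega_trace S (mat_diag (2 * S) d) + 2 * s\<^sup>2 * (d u - d v) * (d (partner u) - d (partner v))"
proof -
  let ?G = "rotated_mat_diag (2 * S) u v c s d"
  have "u \<noteq> v" using uv by auto
  have no_pairing: "?G $$ (i, j) * ?G $$ (partner j, partner i) = 0" if "i < 2 * S" "j < 2 * S" "i \<noteq> j" for i j
  proof -
    have "partner j \<noteq> partner i" using that(3) by (metis partner_partner)
    then show ?thesis
      using rotated_mat_diag_off_diag[OF _ _ _ uv(1,2) \<open>u \<noteq> v\<close>] that partner_less
        partner_notin_other_mode[OF uv(3)] by auto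
  qed
  have "omega_trace S ?G = - 2 * (\<Sum>k<S. ?G $$ (2 * k, 2 * k) * ?G $$ (Suc (2 * k), Suc (2 * k)))"
    by (rule omega_trace_eq_mode_products[OF rotated_mat_diag_carrier no_pairing])
  also have "\<dots> = - 2 * (\<Sum>k<S. d (2 * k) * d (Suc (2 * k))
      + (if k = u div 2 then s\<^sup>2 * (d v - d u) * d (partner u) else 0)
      + (if k = v div 2 then s\<^sup>2 * (d u - d v) * d (partner v) else 0))"
    by (subst sum.cong[OF refl rotated_mat_diag_mode_product[OF uv cs]]) simp_all
  also have "\<dots> = omega_trace S (mat_diag (2 * S) d) + 2 * s\<^sup>2 * (d u - d v) * (d (partner u) - d (partner v))"
    unfolding omega_trace_mat_diag using uv by (simp add: sum.distrib less_mult_imp_div_less algebra_simps)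
  finally show ?thesis .
qed

lemma small_angle_exists:
  fixes a b \<delta> :: real
  assumes "a > 0" "b > 0"
  shows "\<exists>t. 0 < t \<and> t < 1 \<and> a - t * \<delta> \<ge> 0 \<and> b + t * \<delta> \<ge> 0 \<and>
    (1 - t) * t * \<delta>\<^sup>2 \<le> (a - t * \<delta>) * (b + t * \<delta>)"
proof -
  have "((\<lambda>t. a - t * \<delta>) \<longlongrightarrow> a) (at_right 0)" "((\<lambda>t. b + t * \<delta>) \<longlongrightarrow> b) (at_right 0)"
    and det: "((\<lambda>t. (a - t * \<delta>) * (b + t * \<delta>) - (1 - t) * t * \<delta>\<^sup>2) \<longlongrightarrow> a * b) (at_right 0)"
    and ident: "((\<lambda>t. t) \<longlongrightarrow> 0) (at_right (0::real))"
    by (auto intro!: tendsto_eq_intros)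
  then have "\<forall>\<^sub>F t in at_right 0. 0 < t \<and> t < 1 \<and> a - t * \<delta> > 0 \<and> b + t * \<delta> > 0 \<and>
      (a - t * \<delta>) * (b + t * \<delta>) - (1 - t) * t * \<delta>\<^sup>2 > 0"
    using assms eventually_at_right_less[of 0] order_tendstoD(1)[OF det, of 0] order_tendstoD(2)[OF ident, of 1]
    by (intro eventually_conj) (auto dest: order_tendstoD)
  then obtain t where "0 < t \<and> t < 1 \<and> a - t * \<delta> > 0 \<and> b + t * \<delta> > 0 \<and>
      (a - t * \<delta>) * (b + t * \<delta>) - (1 - t) * t * \<delta>\<^sup>2 > 0"
    using eventually_happens' trivial_limit_at_right_real by blast
  then show ?thesis by (intro exI[of _ t]) auto
qed

lemma exists_orthogonally_congruent_quantum_CMs: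
  fixes S u v :: nat and d :: "nat \<Rightarrow> real" and Lam :: "real list"
  assumes sorted: "sorted_wrt (\<ge>) Lam" and entries: "mset (map d [0..<2 * S]) = mset Lam"
    and pos: "\<And>i. i < 2 * S \<Longrightarrow> d i > 0"
    and modes: "\<And>k. k < S \<Longrightarrow> d (2 * k) * d (Suc (2 * k)) \<ge> 1"
    and uv: "u < 2 * S" "v < 2 * S" "u div 2 \<noteq> v div 2"
    and squeezed: "d u * d (partner u) > 1" "d v * d (partner v) > 1"
    and distinct: "d u \<noteq> d v" "d (partner u) \<noteq> d (partner v)"
  shows "\<exists>G1 G2 Q. quantum_CM S G1 \<and> eigenspectrum G1 Lam \<and> quantum_CM S G2 \<and> eigenspectrum G2 Lam \<and>
    orthogonal_real (2 * S) Q \<and> G2 = Q * G1 * transpose_mat Q \<and> omega_trace S G1 \<noteq> omega_trace S G2"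
proof -
  have "u \<noteq> v" using uv by auto
  have "d (partner u) > 0" "d (partner v) > 0" using pos partner_less uv by auto
  define a where "a = d u - 1 / d (partner u)"
  define b where "b = d v - 1 / d (partner v)"
  have "a > 0" "b > 0"
    using squeezed \<open>d (partner u) > 0\<close> \<open>d (partner v) > 0\<close> unfolding a_def b_def by (simp_all add: field_simps)
  then obtain t where t: "0 < t" "t < 1" "a - t * (d u - d v) \<ge> 0" "b + t * (d u - d v) \<ge> 0"
    "(1 - t) * t * (d u - d v)\<^sup>2 \<le> (a - t * (d u - d v)) * (b + t * (d u - d v))"
    using small_angle_exists by blast
  define c where "c = sqrt (1 - t)"
  define s where "s = sqrt t"
  have c2: "c\<^sup>2 = 1 - t" and s2: "s\<^sup>2 = t" using t by (simp_all add: c_def s_def)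
  then have cs: "c\<^sup>2 + s\<^sup>2 = 1" by simp
  let ?Q = "givens_mat (2 * S) u v c s" and ?D = "mat_diag (2 * S) d"
  have "c\<^sup>2 * d u + s\<^sup>2 * d v - 1 / d (partner u) = a - t * (d u - d v)"
    "s\<^sup>2 * d u + c\<^sup>2 * d v - 1 / d (partner v) = b + t * (d u - d v)"
    by (simp_all add: a_def b_def c2 s2 algebra_simps)
  moreover have "(c * s * (d u - d v))\<^sup>2 = (1 - t) * t * (d u - d v)\<^sup>2"
    by (simp only: power_mult_distrib c2 s2)
  ultimately have rotated: "quantum_CM S (rotated_mat_diag (2 * S) u v c s d)"
    using t by (intro quantum_CM_rotated_mat_diag[OF uv cs pos modes]) simp_all
  have diagonal: "quantum_CM S ?D"
    using quantum_CM_rotated_mat_diag[OF uv _ pos modes, of 1 0] \<open>a > 0\<close> \<open>b > 0\<close>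
    unfolding a_def b_def by simp
  have Q: "orthogonal_real (2 * S) ?Q"
    using uv(1,2) \<open>u \<noteq> v\<close> cs by (rule orthogonal_real_givens_mat)
  have "eigenspectrum ?D Lam"
    using eigenspectrum_orthogonal_congruence_mat_diag[OF orthogonal_real_givens_mat[OF uv(1,2) \<open>u \<noteq> v\<close>, of 1 0]
        sorted entries] by simp
  moreover have "omega_trace S ?D \<noteq> omega_trace S (rotated_mat_diag (2 * S) u v c s d)"
    using omega_trace_rotated_mat_diag[OF uv cs] t(1) s2 distinct by simp
  ultimately show ?thesis
    using rotated diagonal Q eigenspectrum_orthogonal_congruence_mat_diag[OF Q sorted entries]
    unfolding rotated_mat_diag_def by blast
qed

section \<open>The perfect matching\<close>

lemma mset_map_nth_bij:
  assumes "bij_betw f {..<length xs} {..<length xs}"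
  shows "mset (map (\<lambda>i. xs ! f i) [0..<length xs]) = mset xs"
proof -
  define g where "g i = (if i < length xs then f i else i)" for i
  have "bij_betw g {..<length xs} {..<length xs}"
    using assms by (rule bij_betw_cong[THEN iffD1, rotated]) (simp add: g_def)
  then have "g permutes {..<length xs}"
    by (rule bij_imp_permutes) (simp add: g_def)
  then have "mset (permute_list g xs) = mset xs" by (rule mset_permute_list)
  moreover have "permute_list g xs = map (\<lambda>i. xs ! f i) [0..<length xs]"
    unfolding permute_list_def g_def by simp
  ultimately show ?thesis by simp
qed

lemma perfect_matching_enumeration_bij:
  assumes M: "perfect_matching Lam {{p i, q i} | i. i < S}" and len: "length Lam = 2 * S"
  shows "bij_betw (\<lambda>i. if even i then p (i div 2) else q (i div 2)) {..<2 * S} {..<2 * S}"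
proof -
  let ?f = "\<lambda>i. if even i then p (i div 2) else q (i div 2)"
  have edges: "\<forall>e \<in> {{p i, q i} | i. i < S}. \<exists>i j. e = {i, j} \<and> edge_G Lam i j"
    using M unfolding perfect_matching_def by (rule conjunct1)
  have cover: "\<forall>w < length Lam. \<exists>!e. e \<in> {{p i, q i} | i. i < S} \<and> w \<in> e"
    using M unfolding perfect_matching_def by (rule conjunct2)
  have ends: "p k < 2 * S \<and> q k < 2 * S" if "k < S" for k
  proof -
    have "{p k, q k} \<in> {{p i, q i} | i. i < S}" using that by blast
    from bspec[OF edges this] obtain i j where ij: "{p k, q k} = {i, j}" "edge_G Lam i j" by blast
    then have "p k \<in> {i, j}" "q k \<in> {i, j}" by (simp_all add: ij(1)[symmetric])
    then show ?thesis using ij(2) len unfolding edge_G_def by auto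
  qed
  have "?f ` {..<2 * S} = {..<2 * S}"
  proof
    show "?f ` {..<2 * S} \<subseteq> {..<2 * S}" using ends by auto
    show "{..<2 * S} \<subseteq> ?f ` {..<2 * S}"
    proof
      fix w assume "w \<in> {..<2 * S}"
      then have "\<exists>!e. e \<in> {{p i, q i} | i. i < S} \<and> w \<in> e" using cover len by simp
      then have "\<exists>e. e \<in> {{p i, q i} | i. i < S} \<and> w \<in> e" by (rule ex1_implies_ex)
      then obtain k where k: "k < S" "w = p k \<or> w = q k" by blast
      then have "w = ?f (2 * k) \<or> w = ?f (Suc (2 * k))" by simp
      moreover have "2 * k \<in> {..<2 * S}" "Suc (2 * k) \<in> {..<2 * S}" using k by auto
      ultimately show "w \<in> ?f ` {..<2 * S}" by blast
    qed
  qed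
  moreover from this have "inj_on ?f {..<2 * S}"
    by (intro eq_card_imp_inj_on) simp_all
  ultimately show ?thesis unfolding bij_betw_def by simp
qed

lemma perfect_matching_endpoints:
  assumes M: "perfect_matching Lam {{p i, q i} | i. i < S}" and len: "length Lam = 2 * S"
  shows "\<forall>i < S. p i \<noteq> q i" and "inj_on (\<lambda>i. {p i, q i}) {..<S}"
proof -
  let ?f = "\<lambda>i. if even i then p (i div 2) else q (i div 2)"
  have inj_f: "inj_on ?f {..<2 * S}"
    using perfect_matching_enumeration_bij[OF M len] by (rule bij_betw_imp_inj_on)
  show "\<forall>i < S. p i \<noteq> q i"
  proof (intro allI impI)
    fix i assume "i < S"
    then have "2 * i \<in> {..<2 * S}" "Suc (2 * i) \<in> {..<2 * S}" by auto
    then show "p i \<noteq> q i" using inj_onD[OF inj_f, of "2 * i" "Suc (2 * i)"] by auto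
  qed
  show "inj_on (\<lambda>i. {p i, q i}) {..<S}"
  proof (rule inj_onI)
    fix i j assume ij: "i \<in> {..<S}" "j \<in> {..<S}" "{p i, q i} = {p j, q j}"
    then have "?f (2 * i) = ?f (2 * j) \<or> ?f (2 * i) = ?f (Suc (2 * j))"
      by (auto simp: doubleton_eq_iff)
    moreover have "2 * i \<in> {..<2 * S}" "2 * j \<in> {..<2 * S}" "Suc (2 * j) \<in> {..<2 * S}"
      using ij(1,2) by auto
    ultimately have "2 * i = 2 * j \<or> 2 * i = Suc (2 * j)"
      using inj_onD[OF inj_f] by blast
    then show "i = j" by presburger
  qed
qed

lemma two_impure_matching_edges:
  assumes upc: "unique_pairing Lam" and not_pure: "\<not> t_pure_unique_pairing (S - 1) Lam"
    and M: "perfect_matching Lam {{p i, q i} | i. i < S}" and len: "length Lam = 2 * S"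
  shows "\<exists>i j. i < S \<and> j < S \<and> i \<noteq> j \<and> Lam ! p i * Lam ! q i \<noteq> 1 \<and> Lam ! p j * Lam ! q j \<noteq> 1"
proof (rule ccontr)
  let ?e = "\<lambda>i. {p i, q i}" and ?I = "{i. i < S \<and> Lam ! p i * Lam ! q i \<noteq> 1}"
  assume "\<not> ?thesis"
  then have "card ?I \<le> 1" by (auto simp: card_le_Suc0_iff_eq)
  have pure: "pure_edge Lam (?e i)" if "i \<in> {..<S} - ?I" for i
  proof -
    have prod: "Lam ! p i * Lam ! q i = 1" and "p i \<noteq> q i"
      using that perfect_matching_endpoints(1)[OF M len] by auto
    then consider "p i < q i" | "q i < p i" by linarith
    then show ?thesis
    proof cases
      case 1
      then show ?thesis unfolding pure_edge_def using prod by blast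
    next
      case 2
      show ?thesis
        unfolding pure_edge_def using 2 prod
        by (intro exI[of _ "q i"] exI[of _ "p i"]) (auto simp: insert_commute mult.commute)
    qed
  qed
  have "S - 1 \<le> card ({..<S} - ?I)"
    using \<open>card ?I \<le> 1\<close> card_Diff_subset[of ?I "{..<S}"] by (auto simp: subset_eq)
  also have "\<dots> = card (?e ` ({..<S} - ?I))"
    using perfect_matching_endpoints(2)[OF M len] by (simp add: card_image inj_on_diff)
  also have "\<dots> \<le> card {e \<in> {?e i | i. i < S}. pure_edge Lam e}"
    using pure by (intro card_mono) auto
  finally have "t_pure_unique_pairing (S - 1) Lam"
    unfolding t_pure_unique_pairing_def using upc M by blast
  then show False using not_pure by simp
qed

lemma downward_closed_eq_lessThan_card:
  assumes closed: "\<And>i j. i \<le> j \<Longrightarrow> j < S \<Longrightarrow> P j \<Longrightarrow> P i"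
  shows "{i. i < S \<and> P i} = {..<card {i. i < S \<and> P i}}"
proof -
  let ?A = "{i. i < S \<and> P i}"
  have "i \<in> ?A \<longleftrightarrow> i < card ?A" for i
  proof
    assume i: "i \<in> ?A"
    have "{..i} \<subseteq> ?A"
    proof
      fix j assume "j \<in> {..i}"
      then show "j \<in> ?A" using closed[of j i] i by auto
    qed
    then show "i < card ?A" using card_mono[of ?A "{..i}"] by simp
  next
    assume i: "i < card ?A"
    show "i \<in> ?A"
    proof (rule ccontr)
      assume "i \<notin> ?A"
      have "?A \<subseteq> {..<i}"
      proof
        fix j assume j: "j \<in> ?A"
        show "j \<in> {..<i}"
        proof (rule ccontr)
          assume "j \<notin> {..<i}"
          then have "P i" "i < S" using closed[of i j] j by auto
          then show False using \<open>i \<notin> ?A\<close> by simp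
        qed
      qed
      then show False using card_mono[of "{..<i}" ?A] i by simp
    qed
  qed
  then show ?thesis unfolding set_eq_iff lessThan_iff by blast
qed

lemma unique_entries_in_distinct_modes:
  fixes x :: "nat \<Rightarrow> 'a"
  assumes z: "2 \<le> z" and ab: "a < 2 * z" "b < 2 * z" "a \<noteq> b"
    and unique_a: "\<forall>k < 2 * z. k \<noteq> a \<longrightarrow> x k \<noteq> x a"
    and unique_b: "\<forall>k < 2 * z. k \<noteq> b \<longrightarrow> x k \<noteq> x b"
  shows "\<exists>u v. u < 2 * z \<and> v < 2 * z \<and> u div 2 \<noteq> v div 2 \<and> x u \<noteq> x v \<and> x (partner u) \<noteq> x (partner v)"
proof (cases "a div 2 = b div 2")
  case False
  then have "partner b \<noteq> a" "partner a \<noteq> b" using partner_div by metis+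
  then have "x a \<noteq> x (partner b)" "x (partner a) \<noteq> x (partner (partner b))"
    using unique_a unique_b partner_less[OF ab(1)] partner_less[OF ab(2)] by auto
  then show ?thesis
    using ab False partner_less[OF ab(2)] by (intro exI[of _ a] exI[of _ "partner b"]) simp
next
  case True
  then have b: "b = partner a" using ab(3) unfolding partner_def by presburger
  define k where "k = (if a div 2 = 0 then 1 else (0::nat))"
  have k: "2 * k < 2 * z" "k \<noteq> a div 2" unfolding k_def using z by auto
  then have "2 * k \<noteq> a" by auto
  moreover from this have "partner (2 * k) \<noteq> b" using b by (metis partner_partner)
  ultimately have "x (2 * k) \<noteq> x a" "x (partner (2 * k)) \<noteq> x b"
    using unique_a unique_b k(1) partner_less[OF k(1)] by blast+
  then show ?thesis
    using ab k b by (intro exI[of _ a] exI[of _ "2 * k"]) auto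
qed

definition mode_spectrum :: "(nat \<Rightarrow> real) \<Rightarrow> (nat \<Rightarrow> real) \<Rightarrow> nat \<Rightarrow> real" where
  "mode_spectrum nu r k =
    (if even k then nu (k div 2) * exp (- 2 * r (k div 2)) else nu (k div 2) * exp (2 * r (k div 2)))"

lemma mode_spectrum_mult_partner: "mode_spectrum nu r k * mode_spectrum nu r (partner k) = (nu (k div 2))\<^sup>2"
proof -
  have e: "exp (- 2 * x) * exp (2 * x) = 1" for x :: real by (simp flip: exp_add)
  show ?thesis
  proof (cases "even k")
    case True
    then have "partner k = Suc k" "Suc k div 2 = k div 2" "odd (Suc k)" by (auto simp: partner_def)
    then show ?thesis
      using True e[of "r (k div 2)"] by (simp add: mode_spectrum_def power2_eq_square algebra_simps)
  next
    case False
    then have "partner k = k - 1" "(k - 1) div 2 = k div 2" "even (k - 1)"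
      by (auto simp: partner_def) presburger+
    then show ?thesis
      using False e[of "r (k div 2)"] by (simp add: mode_spectrum_def power2_eq_square algebra_simps)
  qed
qed

lemma mode_spectrum_pos: "nu (i div 2) > 0 \<Longrightarrow> mode_spectrum nu r i > 0"
  by (simp add: mode_spectrum_def)

lemma mode_spectrum_mode_product: "mode_spectrum nu r (2 * k) * mode_spectrum nu r (Suc (2 * k)) = (nu k)\<^sup>2"
  using mode_spectrum_mult_partner[of nu r "2 * k"] by (simp add: partner_def)

lemma card_squeezed_modes_ge_two:
  assumes upc: "unique_pairing Lam" and not_pure: "\<not> t_pure_unique_pairing (S - 1) Lam"
    and M: "perfect_matching Lam {{p i, q i} | i. i < S}" and len: "length Lam = 2 * S"
    and pair_vals: "\<forall>i < S. Lam ! (p i) = nu i * exp (- 2 * r i) \<and> Lam ! (q i) = nu i * exp (2 * r i)"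
    and nu_ge1: "\<forall>i < S. nu i \<ge> 1"
  shows "2 \<le> card {i. i < S \<and> nu i > 1}"
proof -
  have squeezed: "nu k > 1" if "k < S" "Lam ! p k * Lam ! q k \<noteq> 1" for k
  proof -
    have "Lam ! p k * Lam ! q k = mode_spectrum nu r (2 * k) * mode_spectrum nu r (Suc (2 * k))"
      using pair_vals that(1) by (simp add: mode_spectrum_def)
    then have "(nu k)\<^sup>2 \<noteq> 1" using that(2) by (simp add: mode_spectrum_mode_product)
    then show ?thesis using nu_ge1 that(1) by (metis le_less power_one)
  qed
  obtain i j where "i < S" "j < S" "i \<noteq> j" "Lam ! p i * Lam ! q i \<noteq> 1" "Lam ! p j * Lam ! q j \<noteq> 1"
    using two_impure_matching_edges[OF upc not_pure M len] by blast
  then have "{i, j} \<subseteq> {i. i < S \<and> nu i > 1}" "card {i, j} = 2" using squeezed by auto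
  then show ?thesis using card_mono[of "{i. i < S \<and> nu i > 1}" "{i, j}"] by simp
qed

lemma mode_spectrum_mset_eq:
  assumes M: "perfect_matching Lam {{p i, q i} | i. i < S}" and len: "length Lam = 2 * S"
    and pair_vals: "\<forall>i < S. Lam ! (p i) = nu i * exp (- 2 * r i) \<and> Lam ! (q i) = nu i * exp (2 * r i)"
  shows "mset (map (mode_spectrum nu r) [0..<2 * S]) = mset Lam"
proof -
  let ?f = "\<lambda>i. if even i then p (i div 2) else q (i div 2)"
  have "map (mode_spectrum nu r) [0..<2 * S] = map (\<lambda>i. Lam ! ?f i) [0..<2 * S]"
    using pair_vals by (intro map_cong refl) (auto simp: mode_spectrum_def)
  then show ?thesis
    using mset_map_nth_bij[of ?f Lam, unfolded len, OF perfect_matching_enumeration_bij[OF M len]]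
    by (simp only:)
qed

lemma squeezed_cross_mode_pair:
  fixes nu r :: "nat \<Rightarrow> real"
  assumes two: "2 \<le> card {i. i < S \<and> nu i > 1}"
    and nu_sorted: "\<forall>i j. i \<le> j \<and> j < S \<longrightarrow> nu j \<le> nu i"
    and distinct_entries:
      "let \<zeta> = card {i. i < S \<and> nu i > 1};
           tup = (\<lambda>k. if even k then nu (k div 2) * exp (- 2 * r (k div 2))
                               else nu (k div 2) * exp (2 * r (k div 2)))
       in \<exists>a b. a < 2 * \<zeta> \<and> b < 2 * \<zeta> \<and> a \<noteq> b \<and>
               (\<forall>k < 2 * \<zeta>. k \<noteq> a \<longrightarrow> tup k \<noteq> tup a) \<and>
               (\<forall>k < 2 * \<zeta>. k \<noteq> b \<longrightarrow> tup k \<noteq> tup b)"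
  shows "\<exists>u v. u < 2 * S \<and> v < 2 * S \<and> u div 2 \<noteq> v div 2 \<and>
    mode_spectrum nu r u * mode_spectrum nu r (partner u) > 1 \<and>
    mode_spectrum nu r v * mode_spectrum nu r (partner v) > 1 \<and>
    mode_spectrum nu r u \<noteq> mode_spectrum nu r v \<and>
    mode_spectrum nu r (partner u) \<noteq> mode_spectrum nu r (partner v)"
proof -
  let ?d = "mode_spectrum nu r"
  define \<zeta> where "\<zeta> = card {i. i < S \<and> nu i > 1}"
  have squeezed: "{i. i < S \<and> nu i > 1} = {..<\<zeta>}"
    unfolding \<zeta>_def using nu_sorted
    by (intro downward_closed_eq_lessThan_card) (meson less_le_trans)
  have "\<zeta> \<le> S"
    unfolding \<zeta>_def using card_mono[of "{..<S}" "{i. i < S \<and> nu i > 1}"] by auto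
  have "\<exists>a b. a < 2 * \<zeta> \<and> b < 2 * \<zeta> \<and> a \<noteq> b \<and> (\<forall>k < 2 * \<zeta>. k \<noteq> a \<longrightarrow> ?d k \<noteq> ?d a) \<and>
      (\<forall>k < 2 * \<zeta>. k \<noteq> b \<longrightarrow> ?d k \<noteq> ?d b)"
    using distinct_entries unfolding Let_def \<zeta>_def[symmetric] mode_spectrum_def[abs_def] .
  then obtain u v where uv: "u < 2 * \<zeta>" "v < 2 * \<zeta>" "u div 2 \<noteq> v div 2" "?d u \<noteq> ?d v"
    "?d (partner u) \<noteq> ?d (partner v)"
    using unique_entries_in_distinct_modes[OF two[folded \<zeta>_def]] by blast
  have "?d w * ?d (partner w) > 1" if "w < 2 * \<zeta>" for w
  proof -
    have "w div 2 \<in> {..<\<zeta>}" using that by auto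
    then have "nu (w div 2) > 1" using squeezed by blast
    then show ?thesis by (simp add: mode_spectrum_mult_partner one_less_power)
  qed
  moreover have "u < 2 * S" "v < 2 * S" using uv(1,2) \<open>\<zeta> \<le> S\<close> by linarith+
  ultimately show ?thesis using uv by blast
qed

theorem corollary1:
  fixes S :: nat and Lam :: "real list" and nu r :: "nat \<Rightarrow> real" and p q :: "nat \<Rightarrow> nat"
  assumes S: "S \<ge> 1"
    and spec: "\<exists>G. quantum_CM S G \<and> eigenspectrum G Lam"
    and upc: "unique_pairing Lam"
    and not_pure: "\<not> t_pure_unique_pairing (S - 1) Lam"
    (* the unique perfect matching written as pairs (nu_i e^{-2 r_i}, nu_i e^{2 r_i}) *)
    and match: "perfect_matching Lam {{p i, q i} | i. i < S}"
    and pair_vals: "\<forall>i < S. Lam ! (p i) = nu i * exp (- 2 * r i) \<and> Lam ! (q i) = nu i * exp (2 * r i)"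
    and r_nonneg: "\<forall>i < S. r i \<ge> 0"
    and nu_ge1: "\<forall>i < S. nu i \<ge> 1"
    and nu_sorted: "\<forall>i j. i \<le> j \<and> j < S \<longrightarrow> nu j \<le> nu i"
    (* at least two entries of the 2 zeta-tuple differ from all other entries *)
    and distinct_entries:
      "let \<zeta> = card {i. i < S \<and> nu i > 1};
           tup = (\<lambda>k. if even k then nu (k div 2) * exp (- 2 * r (k div 2))
                               else nu (k div 2) * exp (2 * r (k div 2)))
       in \<exists>a b. a < 2 * \<zeta> \<and> b < 2 * \<zeta> \<and> a \<noteq> b \<and>
               (\<forall>k < 2 * \<zeta>. k \<noteq> a \<longrightarrow> tup k \<noteq> tup a) \<and>
               (\<forall>k < 2 * \<zeta>. k \<noteq> b \<longrightarrow> tup k \<noteq> tup b)"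
  shows
    "(\<exists>G1 G2. quantum_CM S G1 \<and> eigenspectrum G1 Lam \<and>
              quantum_CM S G2 \<and> eigenspectrum G2 Lam \<and>
              (\<forall>nu1 nu2. symplectic_eigenvalues S G1 nu1 \<and> symplectic_eigenvalues S G2 nu2
                   \<longrightarrow> mset nu1 \<noteq> mset nu2))
     \<and>
     (\<exists>G1 G2. quantum_CM S G1 \<and> eigenspectrum G1 Lam \<and>
              quantum_CM S G2 \<and> eigenspectrum G2 Lam \<and>
              (\<exists>Q. orthogonal_real (2*S) Q \<and> G2 = Q * G1 * transpose_mat Q) \<and>
              \<not> (\<exists>K \<in> SpO S. G2 = K * G1 * transpose_mat K))"
proof -
  obtain G0 where G0: "quantum_CM S G0" "eigenspectrum G0 Lam" using spec by blast
  then have sorted: "sorted_wrt (\<ge>) Lam" unfolding eigenspectrum_def by blast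
  have len: "length Lam = 2 * S" using G0 by (rule length_eigenspectrum_quantum_CM)
  obtain u v where uv: "u < 2 * S" "v < 2 * S" "u div 2 \<noteq> v div 2"
    "mode_spectrum nu r u * mode_spectrum nu r (partner u) > 1"
    "mode_spectrum nu r v * mode_spectrum nu r (partner v) > 1"
    "mode_spectrum nu r u \<noteq> mode_spectrum nu r v"
    "mode_spectrum nu r (partner u) \<noteq> mode_spectrum nu r (partner v)"
    using squeezed_cross_mode_pair[OF card_squeezed_modes_ge_two[OF upc not_pure match len pair_vals nu_ge1]
        nu_sorted distinct_entries] by blast
  have "mode_spectrum nu r i > 0" if "i < 2 * S" for i
    using nu_ge1[rule_format, of "i div 2"] that by (intro mode_spectrum_pos) linarith
  moreover have "mode_spectrum nu r (2 * k) * mode_spectrum nu r (Suc (2 * k)) \<ge> 1" if "k < S" for k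
    using nu_ge1 that by (simp add: mode_spectrum_mode_product one_le_power)
  ultimately obtain G1 G2 Q where G: "quantum_CM S G1" "eigenspectrum G1 Lam" "quantum_CM S G2"
    "eigenspectrum G2 Lam" "orthogonal_real (2 * S) Q" "G2 = Q * G1 * transpose_mat Q"
    and distinct_trace: "omega_trace S G1 \<noteq> omega_trace S G2"
    using exists_orthogonally_congruent_quantum_CMs[OF sorted mode_spectrum_mset_eq[OF match len pair_vals]]
      uv by blast
  have "G1 \<in> carrier_mat (2 * S) (2 * S)" using G(1) unfolding quantum_CM_def by blast
  then have "\<not> (\<exists>K \<in> SpO S. G2 = K * G1 * transpose_mat K)"
    using distinct_trace by (rule not_SpO_congruent)
  moreover have "\<forall>nu1 nu2. symplectic_eigenvalues S G1 nu1 \<and> symplectic_eigenvalues S G2 nu2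
      \<longrightarrow> mset nu1 \<noteq> mset nu2"
    using symplectic_eigenvalues_mset_neq distinct_trace by blast
  ultimately show ?thesis using G by blast
qed

end
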